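(* Let $K=\{k_0,k_1,\dots,k_n\}$ be a finite set of alternatives, $K_*=K\setminus\{k_0\}$, $T_1=\{t_1^a,t_1^b\}$, $T_2$ a finite set, $T=T_1\times T_2$, and $\lambda$ a probability measure on $T$ with $\lambda(t)>0$ for all $t$, equal to the product of its marginals $\lambda_1,\lambda_2$. Let real numbers $Q_i^k(t_i)$ ($k\in K_*$) be given, put $Q_i^{k_0}(t_i)=1-\sum_{k\in K_*}Q_i^k(t_i)$, $h_i^k(t_i)=Q_i^k(t_i)\lambda_i(t_i)$ for all $k\in K$, and assume $\sum_{t_1\in T_1}h_1^k(t_1)=\sum_{t_2\in T_2}h_2^k(t_2)$ for all $k\in K_*$. Let $P_{\mathcal I}$ denote the system: $x^k:T\to\mathbb{R}_{\ge 0}$ ($k\in K$) with $\sum_{t_{-i}}x^k(t)=h_i^k(t_i)$ for all $k\in K_*$, $t_i\in T_i$, $i=1,2$, and $\sum_{k\in K}x^k(t)=\lambda(t)$ for all $t\in T$. Let $P(t_1^a)$ denote the system: $x^k:T\to\mathbb{R}_{\ge0}$ ($k\in K$) with $$\sum_{t_{-i}\in T_{-i}}x^k(t)=h_i^k(t_i)\ \text{ for all }(k,t_i)\in K\times\big(T_2\cup\{t_1^b\}\big),\qquad \sum_{k\in K}x^k(t_1^a,t_2)=\lambda(t_1^a,t_2)\ \text{ for all }t_2\in T_2.$$ Then: (1) $P_{\mathcal I}$ has a feasible solution if and only if $P(t_1^a)$ has a feasible solution. (2) $P(t_1^a)$ is a network flow problem on the bipartite graph with supply nodes $V_1=K\times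 T_2$ and demand nodes $V_2=(K\times\{t_1^b\})\cup(\{t_1^a\}\times T_2)$, with an arc from each $(k,t_2)$ to $(k,t_1^b)$ (carrying flow $x^k(t_1^b,t_2)$) and an arc from each $(k,t_2)$ to $(t_1^a,t_2)$ (carrying flow $x^k(t_1^a,t_2)$), supply $h_2^k(t_2)$ at $(k,t_2)$, demand $h_1^k(t_1^b)$ at $(k,t_1^b)$ and demand $\lambda(t_1^a,t_2)$ at $(t_1^a,t_2)$: $P(t_1^a)$ has a feasible solution if and only if there is a non-negative flow on these arcs whose total outflow at each supply node equals its supply and whose total inflow at each demand node equals its demand.
   Context: Here $-i$ denotes the player other than $i$ and $t=(t_i,t_{-i})$. *)

theory Defs
  imports Complex_Main
begin

text \<open>Alternatives: a finite type 'k (the set K), with distinguished k0; K_* = UNIV - {k0}.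
  Player 1 types: the set T1 = {ta, tb} in some type 'a.  Player 2 types: a finite type 't2
  (the set T2 = UNIV).\<close>

definition marg1 :: "('a \<times> 't2::finite \<Rightarrow> real) \<Rightarrow> 'a \<Rightarrow> real" where
  "marg1 lam t1 = (\<Sum>t2\<in>UNIV. lam (t1, t2))"

definition marg2 :: "'a set \<Rightarrow> ('a \<times> 't2 \<Rightarrow> real) \<Rightarrow> 't2 \<Rightarrow> real" where
  "marg2 T1 lam t2 = (\<Sum>t1\<in>T1. lam (t1, t2))"

definition Qext :: "'k::finite \<Rightarrow> ('k \<Rightarrow> 'b \<Rightarrow> real) \<Rightarrow> 'k \<Rightarrow> 'b \<Rightarrow> real" where
  "Qext k0 Q k t = (if k = k0 then 1 - (\<Sum>k'\<in>UNIV - {k0}. Q k' t) else Q k t)"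

definition h1 :: "'k::finite \<Rightarrow> ('a \<times> 't2::finite \<Rightarrow> real) \<Rightarrow> ('k \<Rightarrow> 'a \<Rightarrow> real) \<Rightarrow> 'k \<Rightarrow> 'a \<Rightarrow> real" where
  "h1 k0 lam Q1 k t1 = Qext k0 Q1 k t1 * marg1 lam t1"

definition h2 :: "'k::finite \<Rightarrow> 'a set \<Rightarrow> ('a \<times> 't2 \<Rightarrow> real) \<Rightarrow> ('k \<Rightarrow> 't2 \<Rightarrow> real) \<Rightarrow> 'k \<Rightarrow> 't2 \<Rightarrow> real" where
  "h2 k0 T1 lam Q2 k t2 = Qext k0 Q2 k t2 * marg2 T1 lam t2"

definition PI_feasible :: "'k::finite \<Rightarrow> 'a \<Rightarrow> 'a \<Rightarrow> ('a \<times> 't2::finite \<Rightarrow> real)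
    \<Rightarrow> ('k \<Rightarrow> 'a \<Rightarrow> real) \<Rightarrow> ('k \<Rightarrow> 't2 \<Rightarrow> real) \<Rightarrow> bool" where
  "PI_feasible k0 ta tb lam Q1 Q2 \<longleftrightarrow>
    (\<exists>x :: 'k \<Rightarrow> 'a \<times> 't2 \<Rightarrow> real.
      (\<forall>k t1 t2. t1 \<in> {ta, tb} \<longrightarrow> x k (t1, t2) \<ge> 0) \<and>
      (\<forall>k. k \<noteq> k0 \<longrightarrow> (\<forall>t1\<in>{ta, tb}. (\<Sum>t2\<in>UNIV. x k (t1, t2)) = h1 k0 lam Q1 k t1)) \<and>
      (\<forall>k. k \<noteq> k0 \<longrightarrow> (\<forall>t2. (\<Sum>t1\<in>{ta, tb}. x k (t1, t2)) = h2 k0 {ta, tb} lam Q2 k t2)) \<and>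
      (\<forall>t1 t2. t1 \<in> {ta, tb} \<longrightarrow> (\<Sum>k\<in>UNIV. x k (t1, t2)) = lam (t1, t2)))"

definition Pa_feasible :: "'k::finite \<Rightarrow> 'a \<Rightarrow> 'a \<Rightarrow> ('a \<times> 't2::finite \<Rightarrow> real)
    \<Rightarrow> ('k \<Rightarrow> 'a \<Rightarrow> real) \<Rightarrow> ('k \<Rightarrow> 't2 \<Rightarrow> real) \<Rightarrow> bool" where
  "Pa_feasible k0 ta tb lam Q1 Q2 \<longleftrightarrow>
    (\<exists>x :: 'k \<Rightarrow> 'a \<times> 't2 \<Rightarrow> real.
      (\<forall>k t1 t2. t1 \<in> {ta, tb} \<longrightarrow> x k (t1, t2) \<ge> 0) \<and>
      (\<forall>k t2. (\<Sum>t1\<in>{ta, tb}. x k (t1, t2)) = h2 k0 {ta, tb} lam Q2 k t2) \<and>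
      (\<forall>k. (\<Sum>t2\<in>UNIV. x k (tb, t2)) = h1 k0 lam Q1 k tb) \<and>
      (\<forall>t2. (\<Sum>k\<in>UNIV. x k (ta, t2)) = lam (ta, t2)))"

definition feasible_flow :: "'v set \<Rightarrow> 'w set \<Rightarrow> ('v \<times> 'w) set \<Rightarrow> ('v \<Rightarrow> real) \<Rightarrow> ('w \<Rightarrow> real) \<Rightarrow> bool" where
  "feasible_flow V1 V2 A s d \<longleftrightarrow>
    (\<exists>f :: 'v \<times> 'w \<Rightarrow> real.
      (\<forall>e\<in>A. f e \<ge> 0) \<and>
      (\<forall>v\<in>V1. (\<Sum>w\<in>{w. (v, w) \<in> A}. f (v, w)) = s v) \<and>
      (\<forall>w\<in>V2. (\<Sum>v\<in>{v. (v, w) \<in> A}. f (v, w)) = d w))"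

text \<open>The specific graph: supply nodes (k,t2); demand nodes Inl k = (k,tb) and Inr t2 = (ta,t2).\<close>
definition flow_arcs :: "(('k \<times> 't2) \<times> ('k + 't2)) set" where
  "flow_arcs = {((k, t2), Inl k) | k t2. True} \<union> {((k, t2), Inr t2) | k t2. True}"

definition flow_demand :: "'k::finite \<Rightarrow> 'a \<Rightarrow> 'a \<Rightarrow> ('a \<times> 't2::finite \<Rightarrow> real)
    \<Rightarrow> ('k \<Rightarrow> 'a \<Rightarrow> real) \<Rightarrow> 'k + 't2 \<Rightarrow> real" where
  "flow_demand k0 ta tb lam Q1 w = (case w of Inl k \<Rightarrow> h1 k0 lam Q1 k tb | Inr t2 \<Rightarrow> lam (ta, t2))"

end

theory Submission
  imports Defs
begin

text \<open>Within each family of equations of these systems the totals are forced by the data: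
  the h^k_i sum over k to the marginals of lambda, and for k in K_* the h^k_1 and h^k_2 have
  equal totals.  Hence in every family any one equation follows from the others, which is how
  the equations omitted by P_I (those for k0) and by P(t_1^a) (the row t_1^a and the cells
  (t_1^b, t_2)) are recovered from the other system.  Part (2) merely renames x^k(t_1^b, t_2)
  and x^k(t_1^a, t_2) as the flows on the two arcs leaving (k, t_2).\<close>

lemma eq_if_sum_eq_and_eq_except:
  fixes f g :: "'a \<Rightarrow> 'b::ab_group_add"
  assumes "finite A" and "sum f A = sum g A"
    and "\<And>y. y \<in> A \<Longrightarrow> y \<noteq> a \<Longrightarrow> f y = g y" and "x \<in> A"
  shows "f x = g x"
proof (cases "x = a")
  case True
  have "sum f (A - {x}) = sum g (A - {x})"
    using assms(3) True by (intro sum.cong) auto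
  with assms(1,2,4) show ?thesis
    by (simp add: sum.remove)
qed (use assms(3,4) in blast)

lemma sum_Qext: "(\<Sum>k\<in>UNIV. Qext k0 Q k t) = 1"
proof -
  have "(\<Sum>k\<in>UNIV - {k0}. Qext k0 Q k t) = (\<Sum>k\<in>UNIV - {k0}. Q k t)"
    by (intro sum.cong) (auto simp: Qext_def)
  then show ?thesis
    by (simp add: sum.remove[of UNIV k0] Qext_def)
qed

lemma sum_h1: "(\<Sum>k\<in>UNIV. h1 k0 lam Q1 k t1) = marg1 lam t1"
  by (simp add: h1_def sum_distrib_right[symmetric] sum_Qext)

lemma sum_h2: "(\<Sum>k\<in>UNIV. h2 k0 T1 lam Q2 k t2) = marg2 T1 lam t2"
  by (simp add: h2_def sum_distrib_right[symmetric] sum_Qext)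

lemma PI_feasible_imp_Pa_feasible:
  fixes lam :: "'a \<times> 't2::finite \<Rightarrow> real" and k0 :: "'k::finite"
  assumes "PI_feasible k0 ta tb lam Q1 Q2"
  shows "Pa_feasible k0 ta tb lam Q1 Q2"
proof -
  obtain x :: "'k \<Rightarrow> 'a \<times> 't2 \<Rightarrow> real" where
    nonneg: "\<forall>k t1 t2. t1 \<in> {ta, tb} \<longrightarrow> x k (t1, t2) \<ge> 0" and
    row: "\<forall>k. k \<noteq> k0 \<longrightarrow> (\<forall>t1\<in>{ta, tb}. (\<Sum>t2\<in>UNIV. x k (t1, t2)) = h1 k0 lam Q1 k t1)" and
    col: "\<forall>k. k \<noteq> k0 \<longrightarrow> (\<forall>t2. (\<Sum>t1\<in>{ta, tb}. x k (t1, t2)) = h2 k0 {ta, tb} lam Q2 k t2)" and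
    cell: "\<forall>t1 t2. t1 \<in> {ta, tb} \<longrightarrow> (\<Sum>k\<in>UNIV. x k (t1, t2)) = lam (t1, t2)"
    using assms unfolding PI_feasible_def by (elim exE conjE)
  have col_all: "(\<Sum>t1\<in>{ta, tb}. x k (t1, t2)) = h2 k0 {ta, tb} lam Q2 k t2" for k t2
  proof (rule eq_if_sum_eq_and_eq_except[where A = UNIV and a = k0])
    have "(\<Sum>k\<in>UNIV. \<Sum>t1\<in>{ta, tb}. x k (t1, t2)) = (\<Sum>t1\<in>{ta, tb}. \<Sum>k\<in>UNIV. x k (t1, t2))"
      by (rule sum.swap)
    also have "\<dots> = marg2 {ta, tb} lam t2"
      unfolding marg2_def using cell by (intro sum.cong) auto
    also have "\<dots> = (\<Sum>k\<in>UNIV. h2 k0 {ta, tb} lam Q2 k t2)"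
      by (simp add: sum_h2)
    finally show "(\<Sum>k\<in>UNIV. \<Sum>t1\<in>{ta, tb}. x k (t1, t2)) = (\<Sum>k\<in>UNIV. h2 k0 {ta, tb} lam Q2 k t2)" .
  qed (use col in auto)
  have row_tb: "(\<Sum>t2\<in>UNIV. x k (tb, t2)) = h1 k0 lam Q1 k tb" for k
  proof (rule eq_if_sum_eq_and_eq_except[where A = UNIV and a = k0])
    have "(\<Sum>k\<in>UNIV. \<Sum>t2\<in>UNIV. x k (tb, t2)) = (\<Sum>t2\<in>UNIV. \<Sum>k\<in>UNIV. x k (tb, t2))"
      by (rule sum.swap)
    also have "\<dots> = marg1 lam tb"
      unfolding marg1_def using cell by (intro sum.cong) auto
    also have "\<dots> = (\<Sum>k\<in>UNIV. h1 k0 lam Q1 k tb)"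
      by (simp add: sum_h1)
    finally show "(\<Sum>k\<in>UNIV. \<Sum>t2\<in>UNIV. x k (tb, t2)) = (\<Sum>k\<in>UNIV. h1 k0 lam Q1 k tb)" .
  qed (use row in auto)
  show ?thesis
    unfolding Pa_feasible_def using nonneg col_all row_tb cell by (intro exI[of _ x]) auto
qed

lemma Pa_feasible_imp_PI_feasible:
  fixes lam :: "'a \<times> 't2::finite \<Rightarrow> real" and k0 :: "'k::finite"
  assumes totals: "\<And>k. k \<noteq> k0 \<Longrightarrow>
      (\<Sum>t1\<in>{ta, tb}. h1 k0 lam Q1 k t1) = (\<Sum>t2\<in>UNIV. h2 k0 {ta, tb} lam Q2 k t2)"
    and "Pa_feasible k0 ta tb lam Q1 Q2"
  shows "PI_feasible k0 ta tb lam Q1 Q2"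
proof -
  obtain x :: "'k \<Rightarrow> 'a \<times> 't2 \<Rightarrow> real" where
    nonneg: "\<forall>k t1 t2. t1 \<in> {ta, tb} \<longrightarrow> x k (t1, t2) \<ge> 0" and
    col: "\<forall>k t2. (\<Sum>t1\<in>{ta, tb}. x k (t1, t2)) = h2 k0 {ta, tb} lam Q2 k t2" and
    row_tb: "\<forall>k. (\<Sum>t2\<in>UNIV. x k (tb, t2)) = h1 k0 lam Q1 k tb" and
    cell_ta: "\<forall>t2. (\<Sum>k\<in>UNIV. x k (ta, t2)) = lam (ta, t2)"
    using assms(2) unfolding Pa_feasible_def by (elim exE conjE)
  have row: "(\<Sum>t2\<in>UNIV. x k (t1, t2)) = h1 k0 lam Q1 k t1"
    if "k \<noteq> k0" and "t1 \<in> {ta, tb}" for k t1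
  proof (rule eq_if_sum_eq_and_eq_except[where a = ta, OF _ _ _ that(2)])
    have "(\<Sum>t1\<in>{ta, tb}. \<Sum>t2\<in>UNIV. x k (t1, t2)) = (\<Sum>t2\<in>UNIV. \<Sum>t1\<in>{ta, tb}. x k (t1, t2))"
      by (rule sum.swap)
    then show "(\<Sum>t1\<in>{ta, tb}. \<Sum>t2\<in>UNIV. x k (t1, t2)) = (\<Sum>t1\<in>{ta, tb}. h1 k0 lam Q1 k t1)"
      using col totals[OF that(1)] by simp
  qed (use row_tb in auto)
  have cell: "(\<Sum>k\<in>UNIV. x k (t1, t2)) = lam (t1, t2)" if "t1 \<in> {ta, tb}" for t1 t2
  proof (rule eq_if_sum_eq_and_eq_except[where a = tb, OF _ _ _ that])
    have "(\<Sum>t1\<in>{ta, tb}. \<Sum>k\<in>UNIV. x k (t1, t2)) = (\<Sum>k\<in>UNIV. \<Sum>t1\<in>{ta, tb}. x k (t1, t2))"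
      by (rule sum.swap)
    also have "\<dots> = marg2 {ta, tb} lam t2"
      using col by (simp add: sum_h2)
    finally show "(\<Sum>t1\<in>{ta, tb}. \<Sum>k\<in>UNIV. x k (t1, t2)) = (\<Sum>t1\<in>{ta, tb}. lam (t1, t2))"
      by (simp add: marg2_def)
  qed (use cell_ta in auto)
  show ?thesis
    unfolding PI_feasible_def using nonneg row col cell by (intro exI[of _ x]) auto
qed

text \<open>y k t and z k t are the flows on the arcs from (k, t) to Inl k and to Inr t.\<close>

definition split_feasible ::
    "('k::finite \<Rightarrow> 't::finite \<Rightarrow> real) \<Rightarrow> ('k \<Rightarrow> real) \<Rightarrow> ('t \<Rightarrow> real) \<Rightarrow> bool" where
  "split_feasible s d1 d2 \<longleftrightarrow>
    (\<exists>y z :: 'k \<Rightarrow> 't \<Rightarrow> real.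
      (\<forall>k t. 0 \<le> y k t \<and> 0 \<le> z k t) \<and>
      (\<forall>k t. y k t + z k t = s k t) \<and>
      (\<forall>k. (\<Sum>t\<in>UNIV. y k t) = d1 k) \<and>
      (\<forall>t. (\<Sum>k\<in>UNIV. z k t) = d2 t))"

lemma flow_arcs_out: "{w. ((k, t), w) \<in> flow_arcs} = {Inl k, Inr t}"
  by (auto simp: flow_arcs_def)

lemma flow_arcs_into_Inl: "{v. (v, Inl k) \<in> flow_arcs} = Pair k ` UNIV"
  by (auto simp: flow_arcs_def)

lemma flow_arcs_into_Inr: "{v. (v, Inr t) \<in> flow_arcs} = (\<lambda>k. (k, t)) ` UNIV"
  by (auto simp: flow_arcs_def)

lemma sum_flow_arcs_into_Inl:
  "(\<Sum>v\<in>{v. (v, Inl k) \<in> flow_arcs}. f (v, Inl k)) = (\<Sum>t\<in>UNIV. f ((k, t), Inl k))"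
  by (simp add: flow_arcs_into_Inl sum.reindex inj_on_def)

lemma sum_flow_arcs_into_Inr:
  "(\<Sum>v\<in>{v. (v, Inr t) \<in> flow_arcs}. f (v, Inr t)) = (\<Sum>k\<in>UNIV. f ((k, t), Inr t))"
  by (simp add: flow_arcs_into_Inr sum.reindex inj_on_def)

lemma feasible_flow_flow_arcs_iff:
  fixes s :: "'k::finite \<times> 't::finite \<Rightarrow> real" and d :: "'k + 't \<Rightarrow> real"
  shows "feasible_flow UNIV UNIV flow_arcs s d \<longleftrightarrow>
    split_feasible (\<lambda>k t. s (k, t)) (\<lambda>k. d (Inl k)) (\<lambda>t. d (Inr t))"
proof
  assume "feasible_flow UNIV UNIV flow_arcs s d"
  then obtain f where
    nonneg: "\<forall>e\<in>flow_arcs. f e \<ge> 0" and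
    outflow: "\<forall>v\<in>UNIV. (\<Sum>w\<in>{w. (v, w) \<in> flow_arcs}. f (v, w)) = s v" and
    demand: "\<forall>w\<in>UNIV. (\<Sum>v\<in>{v. (v, w) \<in> flow_arcs}. f (v, w)) = d w"
    unfolding feasible_flow_def by (elim exE conjE)
  show "split_feasible (\<lambda>k t. s (k, t)) (\<lambda>k. d (Inl k)) (\<lambda>t. d (Inr t))"
    unfolding split_feasible_def
  proof (intro exI conjI allI)
    fix k t
    show "0 \<le> f ((k, t), Inl k)" "0 \<le> f ((k, t), Inr t)"
      using nonneg by (auto simp: flow_arcs_def)
    show "f ((k, t), Inl k) + f ((k, t), Inr t) = s (k, t)"
      using outflow[rule_format, of "(k, t)"] by (simp add: flow_arcs_out)
  next
    show "(\<Sum>t\<in>UNIV. f ((k, t), Inl k)) = d (Inl k)" for k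
      using demand[rule_format, of "Inl k"] by (simp add: sum_flow_arcs_into_Inl)
    show "(\<Sum>k\<in>UNIV. f ((k, t), Inr t)) = d (Inr t)" for t
      using demand[rule_format, of "Inr t"] by (simp add: sum_flow_arcs_into_Inr)
  qed
next
  assume "split_feasible (\<lambda>k t. s (k, t)) (\<lambda>k. d (Inl k)) (\<lambda>t. d (Inr t))"
  then obtain y z :: "'k \<Rightarrow> 't \<Rightarrow> real" where
    nonneg: "\<forall>k t. 0 \<le> y k t \<and> 0 \<le> z k t" and
    split: "\<forall>k t. y k t + z k t = s (k, t)" and
    demand1: "\<forall>k. (\<Sum>t\<in>UNIV. y k t) = d (Inl k)" and
    demand2: "\<forall>t. (\<Sum>k\<in>UNIV. z k t) = d (Inr t)"
    unfolding split_feasible_def by (elim exE conjE)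
  define f :: "('k \<times> 't) \<times> ('k + 't) \<Rightarrow> real" where
    "f = (\<lambda>((k, t), w). case w of Inl _ \<Rightarrow> y k t | Inr _ \<Rightarrow> z k t)"
  show "feasible_flow UNIV UNIV flow_arcs s d"
    unfolding feasible_flow_def
  proof (intro exI conjI ballI)
    show "0 \<le> f e" for e
      using nonneg by (auto simp: f_def split: prod.splits sum.splits)
    show "(\<Sum>w\<in>{w. (v, w) \<in> flow_arcs}. f (v, w)) = s v" for v
      using split by (cases v) (simp add: flow_arcs_out f_def)
    show "(\<Sum>v\<in>{v. (v, w) \<in> flow_arcs}. f (v, w)) = d w" for w
      using demand1 demand2 by (cases w; simp only: sum_flow_arcs_into_Inl sum_flow_arcs_into_Inr; simp add: f_def)
  qed
qed

lemma Pa_feasible_iff_split_feasible: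
  fixes lam :: "'a \<times> 't2::finite \<Rightarrow> real" and k0 :: "'k::finite"
  assumes "ta \<noteq> tb"
  shows "Pa_feasible k0 ta tb lam Q1 Q2 \<longleftrightarrow>
    split_feasible (h2 k0 {ta, tb} lam Q2) (\<lambda>k. h1 k0 lam Q1 k tb) (\<lambda>t2. lam (ta, t2))"
proof
  assume "Pa_feasible k0 ta tb lam Q1 Q2"
  then obtain x :: "'k \<Rightarrow> 'a \<times> 't2 \<Rightarrow> real" where
    nonneg: "\<forall>k t1 t2. t1 \<in> {ta, tb} \<longrightarrow> x k (t1, t2) \<ge> 0" and
    col: "\<forall>k t2. (\<Sum>t1\<in>{ta, tb}. x k (t1, t2)) = h2 k0 {ta, tb} lam Q2 k t2" and
    row_tb: "\<forall>k. (\<Sum>t2\<in>UNIV. x k (tb, t2)) = h1 k0 lam Q1 k tb" and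
    cell_ta: "\<forall>t2. (\<Sum>k\<in>UNIV. x k (ta, t2)) = lam (ta, t2)"
    unfolding Pa_feasible_def by (elim exE conjE)
  show "split_feasible (h2 k0 {ta, tb} lam Q2) (\<lambda>k. h1 k0 lam Q1 k tb) (\<lambda>t2. lam (ta, t2))"
    unfolding split_feasible_def
    by (rule exI[of _ "\<lambda>k t2. x k (tb, t2)"], rule exI[of _ "\<lambda>k t2. x k (ta, t2)"])
      (use nonneg col row_tb cell_ta assms in \<open>auto simp: add.commute\<close>)
next
  assume "split_feasible (h2 k0 {ta, tb} lam Q2) (\<lambda>k. h1 k0 lam Q1 k tb) (\<lambda>t2. lam (ta, t2))"
  then obtain y z :: "'k \<Rightarrow> 't2 \<Rightarrow> real" where
    nonneg: "\<forall>k t. 0 \<le> y k t \<and> 0 \<le> z k t" and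
    split: "\<forall>k t. y k t + z k t = h2 k0 {ta, tb} lam Q2 k t" and
    row_tb: "\<forall>k. (\<Sum>t\<in>UNIV. y k t) = h1 k0 lam Q1 k tb" and
    cell_ta: "\<forall>t. (\<Sum>k\<in>UNIV. z k t) = lam (ta, t)"
    unfolding split_feasible_def by (elim exE conjE)
  show "Pa_feasible k0 ta tb lam Q1 Q2"
    unfolding Pa_feasible_def
    by (rule exI[of _ "\<lambda>k (t1, t2). if t1 = ta then z k t2 else y k t2"])
      (use nonneg split row_tb cell_ta assms in \<open>auto simp: add.commute\<close>)
qed

theorem lemma7:
  fixes k0 :: "'k::finite" and ta tb :: 'a
    and lam :: "'a \<times> 't2::finite \<Rightarrow> real"
    and Q1 :: "'k \<Rightarrow> 'a \<Rightarrow> real" and Q2 :: "'k \<Rightarrow> 't2 \<Rightarrow> real"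
  assumes "ta \<noteq> tb"
    and "\<And>t1 t2. t1 \<in> {ta, tb} \<Longrightarrow> lam (t1, t2) > 0"
    and "(\<Sum>t\<in>{ta, tb} \<times> UNIV. lam t) = 1"
    and "\<And>t1 t2. t1 \<in> {ta, tb} \<Longrightarrow> lam (t1, t2) = marg1 lam t1 * marg2 {ta, tb} lam t2"
    and "\<And>k. k \<noteq> k0 \<Longrightarrow>
           (\<Sum>t1\<in>{ta, tb}. h1 k0 lam Q1 k t1) = (\<Sum>t2\<in>UNIV. h2 k0 {ta, tb} lam Q2 k t2)"
  shows "(PI_feasible k0 ta tb lam Q1 Q2 \<longleftrightarrow> Pa_feasible k0 ta tb lam Q1 Q2)
       \<and> (Pa_feasible k0 ta tb lam Q1 Q2 \<longleftrightarrow>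
            feasible_flow (UNIV :: ('k \<times> 't2) set) (UNIV :: ('k + 't2) set) flow_arcs
              (\<lambda>(k, t2). h2 k0 {ta, tb} lam Q2 k t2) (flow_demand k0 ta tb lam Q1))"
proof
  show "PI_feasible k0 ta tb lam Q1 Q2 \<longleftrightarrow> Pa_feasible k0 ta tb lam Q1 Q2"
    by (metis PI_feasible_imp_Pa_feasible Pa_feasible_imp_PI_feasible assms(5))
  have "feasible_flow (UNIV :: ('k \<times> 't2) set) UNIV flow_arcs
          (\<lambda>(k, t2). h2 k0 {ta, tb} lam Q2 k t2) (flow_demand k0 ta tb lam Q1) \<longleftrightarrow>
        split_feasible (h2 k0 {ta, tb} lam Q2) (\<lambda>k. h1 k0 lam Q1 k tb) (\<lambda>t2. lam (ta, t2))"
    by (simp add: feasible_flow_flow_arcs_iff flow_demand_def)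
  then show "Pa_feasible k0 ta tb lam Q1 Q2 \<longleftrightarrow>
      feasible_flow (UNIV :: ('k \<times> 't2) set) (UNIV :: ('k + 't2) set) flow_arcs
        (\<lambda>(k, t2). h2 k0 {ta, tb} lam Q2 k t2) (flow_demand k0 ta tb lam Q1)"
    using Pa_feasible_iff_split_feasible[OF assms(1)] by blast
qed

end
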